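(* Let $\sigma:\mathbb{R}\to\mathbb{R}$ be an increasing odd homeomorphism. Then every point of $\mathbb{R}^2$ that does not belong to a $\sigma$-rational line has a dense orbit in $\mathbb{R}^2$ under the action of the group $\Gamma(\sigma)$.
   Context: For an increasing odd homeomorphism $\sigma:\mathbb{R}\to\mathbb{R}$, define the bijections $h_\sigma,v_\sigma:\mathbb{R}^2\to\mathbb{R}^2$ by $h_\sigma(x,y)=(x+\sigma^{-1}(y),y)$ and $v_\sigma(x,y)=(x,\sigma(x)+y)$, and let $\Gamma(\sigma)$ be the group (under composition) generated by $h_\sigma$ and $v_\sigma$. Let $\mathcal M(h_\sigma,v_\sigma)$ denote the monoid (containing the identity) generated by $h_\sigma,v_\sigma$, and $\mathcal M(h_\sigma^{-1},v_\sigma^{-1})$ the monoid generated by $h_\sigma^{-1},v_\sigma^{-1}$. Let $Ox=\mathbb{R}\times\{0\}$ and $Oy=\{0\}\times\mathbb{R}$. The $\sigma$-rational lines are the subsets of $\mathbb{R}^2$ of the form: $Ox$ or $Oy$; $m(Ox)$ with $m\in\mathcal M(h_\sigma,v_\sigma)$; or $m(Oy)$ with $m\in\mathcal M(h_\sigma^{-1},v_\sigma^{-1})$. *)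

theory Defs
  imports "HOL-Analysis.Analysis"
begin

definition incr_odd_homeo :: "(real \<Rightarrow> real) \<Rightarrow> bool" where
  "incr_odd_homeo \<sigma> \<longleftrightarrow>
     (\<exists>\<tau>. homeomorphism UNIV UNIV \<sigma> \<tau>) \<and> strict_mono \<sigma> \<and> (\<forall>x. \<sigma> (- x) = - \<sigma> x)"

definition h_map :: "(real \<Rightarrow> real) \<Rightarrow> real \<times> real \<Rightarrow> real \<times> real" where
  "h_map \<sigma> = (\<lambda>(x, y). (x + inv \<sigma> y, y))"

definition v_map :: "(real \<Rightarrow> real) \<Rightarrow> real \<times> real \<Rightarrow> real \<times> real" where
  "v_map \<sigma> = (\<lambda>(x, y). (x, \<sigma> x + y))"

inductive_set Gamma :: "(real \<Rightarrow> real) \<Rightarrow> (real \<times> real \<Rightarrow> real \<times> real) set"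
  for \<sigma> where
  Gamma_id: "id \<in> Gamma \<sigma>"
| Gamma_h: "g \<in> Gamma \<sigma> \<Longrightarrow> h_map \<sigma> \<circ> g \<in> Gamma \<sigma>"
| Gamma_v: "g \<in> Gamma \<sigma> \<Longrightarrow> v_map \<sigma> \<circ> g \<in> Gamma \<sigma>"
| Gamma_h_inv: "g \<in> Gamma \<sigma> \<Longrightarrow> inv (h_map \<sigma>) \<circ> g \<in> Gamma \<sigma>"
| Gamma_v_inv: "g \<in> Gamma \<sigma> \<Longrightarrow> inv (v_map \<sigma>) \<circ> g \<in> Gamma \<sigma>"

inductive_set monoid_gen :: "('a \<Rightarrow> 'a) \<Rightarrow> ('a \<Rightarrow> 'a) \<Rightarrow> ('a \<Rightarrow> 'a) set"
  for a b where
  mon_id: "id \<in> monoid_gen a b"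
| mon_a: "m \<in> monoid_gen a b \<Longrightarrow> a \<circ> m \<in> monoid_gen a b"
| mon_b: "m \<in> monoid_gen a b \<Longrightarrow> b \<circ> m \<in> monoid_gen a b"

definition Ox :: "(real \<times> real) set" where "Ox = UNIV \<times> {0}"
definition Oy :: "(real \<times> real) set" where "Oy = {0} \<times> UNIV"

definition rational_lines :: "(real \<Rightarrow> real) \<Rightarrow> (real \<times> real) set set" where
  "rational_lines \<sigma> =
     {Ox, Oy}
     \<union> {m ` Ox | m. m \<in> monoid_gen (h_map \<sigma>) (v_map \<sigma>)}
     \<union> {m ` Oy | m. m \<in> monoid_gen (inv (h_map \<sigma>)) (inv (v_map \<sigma>))}"

definition orbit :: "(real \<Rightarrow> real) \<Rightarrow> real \<times> real \<Rightarrow> (real \<times> real) set" where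
  "orbit \<sigma> p = {g p | g. g \<in> Gamma \<sigma>}"

end

theory Submission
  imports Defs
begin

text \<open>Write \<open>\<tau>\<close> for \<open>\<sigma>\<^sup>-\<^sup>1\<close>, and call the images of the graph \<open>v(Ox)\<close> of \<open>\<sigma>\<close> under the
  monoid generated by \<open>h\<close> and \<open>v\<close> graph lines. On the open quadrant, applying \<open>h\<^sup>-\<^sup>1\<close> below the
  graph of \<open>\<sigma>\<close> and \<open>v\<^sup>-\<^sup>1\<close> above it is a nonlinear Euclidean algorithm. Started off the graph
  lines it never meets the graph, so it stays in the quadrant, and its iterates tend to the
  origin. Hence the orbit of a point off all \<open>\<sigma>\<close>-rational lines contains points off the axes
  arbitrarily close to the origin; the other quadrants are reduced to the first one by
  \<open>-id\<close> and \<open>(x, y) \<mapsto> (-x, y)\<close>, which normalise \<open>\<Gamma>(\<sigma>)\<close>. Shifting such points horizontally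
  by powers of \<open>h\<close> puts \<open>Ox\<close>, and so all graph lines, into the closure of the orbit.

  Graph lines are dense in the quadrant: on a horizontal segment missing them, the descent
  acts by one fixed word in \<open>h\<^sup>-\<^sup>1\<close> and \<open>v\<^sup>-\<^sup>1\<close>, which never shrinks horizontal distances,
  contradicting convergence to the origin. Finally every point off \<open>Ox\<close> is moved into the
  quadrant by \<open>\<Gamma>(\<sigma>)\<close>.\<close>

lemma monoid_gen_comp:
  assumes "m1 \<in> monoid_gen a b" "m2 \<in> monoid_gen a b"
  shows "m1 \<circ> m2 \<in> monoid_gen a b"
  using assms(1)
  by induction (simp_all only: assms(2) id_comp comp_assoc monoid_gen.intros)

lemma monoid_gen_generators:
  "a \<in> monoid_gen a b" "b \<in> monoid_gen a b"
  using monoid_gen.mon_a[OF monoid_gen.mon_id] monoid_gen.mon_b[OF monoid_gen.mon_id] by simp_all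

lemma monoid_gen_odd:
  assumes "\<And>w. a (- w) = - a w" "\<And>w. b (- w) = - b w" "m \<in> monoid_gen a b"
  shows "m (- w) = - m w"
  using assms(3) by (induction arbitrary: w) (simp_all add: assms(1,2))

lemma monoid_gen_continuous:
  assumes "continuous_on UNIV a" "continuous_on UNIV b" "m \<in> monoid_gen a b"
  shows "continuous_on UNIV m"
  using assms(3)
  by induction
    (auto intro!: continuous_on_compose continuous_on_id
       continuous_on_subset[OF assms(1)] continuous_on_subset[OF assms(2)] simp del: o_apply)

lemma Gamma_comp:
  assumes "g1 \<in> Gamma \<sigma>" "g2 \<in> Gamma \<sigma>"
  shows "g1 \<circ> g2 \<in> Gamma \<sigma>"
  using assms(1) by induction (simp_all only: assms(2) id_comp comp_assoc Gamma.intros)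

lemma generators_in_Gamma:
  "h_map \<sigma> \<in> Gamma \<sigma>" "v_map \<sigma> \<in> Gamma \<sigma>"
  "inv (h_map \<sigma>) \<in> Gamma \<sigma>" "inv (v_map \<sigma>) \<in> Gamma \<sigma>"
  by (metis Gamma.intros comp_id)+

lemma Gamma_funpow: "g \<in> Gamma \<sigma> \<Longrightarrow> g ^^ n \<in> Gamma \<sigma>"
  by (induction n) (simp_all only: funpow.simps Gamma_comp Gamma.Gamma_id)

lemma monoid_gen_subset_Gamma: "monoid_gen (h_map \<sigma>) (v_map \<sigma>) \<subseteq> Gamma \<sigma>"
proof
  show "m \<in> Gamma \<sigma>" if "m \<in> monoid_gen (h_map \<sigma>) (v_map \<sigma>)" for m
    using that by induction (rule Gamma.intros; assumption)+
qed

lemma in_orbit_self: "p \<in> orbit \<sigma> p"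
  unfolding orbit_def mem_Collect_eq by (intro exI[of _ id] conjI Gamma.Gamma_id) simp

lemma orbit_Gamma:
  assumes "g \<in> Gamma \<sigma>" "q \<in> orbit \<sigma> p"
  shows "g q \<in> orbit \<sigma> p"
proof -
  obtain g' where "g' \<in> Gamma \<sigma>" "q = g' p"
    using assms(2) by (auto simp: orbit_def)
  then have "g q = (g \<circ> g') p" "g \<circ> g' \<in> Gamma \<sigma>"
    using Gamma_comp[OF assms(1)] by auto
  then show ?thesis
    unfolding orbit_def by blast
qed

lemma rational_lines_Ox: "m \<in> monoid_gen (h_map \<sigma>) (v_map \<sigma>) \<Longrightarrow> m ` Ox \<in> rational_lines \<sigma>"
  unfolding rational_lines_def by (rule UnI1, rule UnI2) blast

lemma rational_lines_Oy:
  "m \<in> monoid_gen (inv (h_map \<sigma>)) (inv (v_map \<sigma>)) \<Longrightarrow> m ` Oy \<in> rational_lines \<sigma>"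
  unfolding rational_lines_def by (rule UnI2) blast

lemma not_bdd_below_if_frequent_drops:
  fixes u :: "nat \<Rightarrow> real"
  assumes "decseq u" "0 < c" and drops: "\<And>N. \<exists>n\<ge>N. u (Suc n) \<le> u n - c"
  shows "\<not> bdd_below (range u)"
proof -
  have far: "\<exists>n. u n \<le> u 0 - real k * c" for k
  proof (induction k)
    case (Suc k)
    then obtain n where "u n \<le> u 0 - real k * c" by blast
    moreover obtain m where "n \<le> m" "u (Suc m) \<le> u m - c" using drops by blast
    moreover have "u m \<le> u n" using \<open>decseq u\<close> \<open>n \<le> m\<close> by (simp add: decseq_def)
    ultimately show ?case by (intro exI[of _ "Suc m"]) (simp add: algebra_simps)
  qed (auto intro: exI[of _ 0])
  have "\<exists>n. u n < B" for B
  proof -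
    obtain k where "u 0 - B < real k * c"
      using reals_Archimedean3[OF \<open>0 < c\<close>] by blast
    moreover obtain n where "u n \<le> u 0 - real k * c"
      using far by blast
    ultimately have "u n < B" by linarith
    then show ?thesis ..
  qed
  then show ?thesis by (auto simp: bdd_below_def not_le)
qed

locale alternating_descent =
  fixes x y :: "nat \<Rightarrow> real" and f g :: "real \<Rightarrow> real"
  assumes x_pos: "0 < x n" and y_pos: "0 < y n"
    and mono_f: "mono f" and mono_g: "mono g"
    and f_pos: "0 < t \<Longrightarrow> 0 < f t" and g_pos: "0 < t \<Longrightarrow> 0 < g t"
    and step: "x (Suc n) = x n - g (y n) \<and> y (Suc n) = y n
             \<or> x (Suc n) = x n \<and> y (Suc n) = y n - f (x n)"
begin

lemma swap: "alternating_descent y x g f"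
  using step by unfold_locales (auto simp: x_pos y_pos mono_f mono_g f_pos g_pos)

lemma decseq_x: "decseq x"
proof (rule decseq_SucI)
  show "x (Suc n) \<le> x n" for n
    using step[of n] g_pos[OF y_pos[of n]] by auto
qed

lemma decseq_y: "decseq y"
  using alternating_descent.decseq_x[OF swap] .

lemma bdd_below_x: "bdd_below (range x)"
  unfolding bdd_below_def using x_pos by (auto intro!: exI[of _ 0] less_imp_le)

lemma frequently_y_step: "\<exists>n\<ge>N. y (Suc n) = y n - f (x n)"
proof (rule ccontr)
  assume "\<not> ?thesis"
  then have x_step: "x (Suc n) = x n - g (y n) \<and> y (Suc n) = y n" if "N \<le> n" for n
    using step[of n] that by auto
  have y_const: "y (N + k) = y N" for k
    by (induction k) (use x_step in auto)
  have "x (Suc n) \<le> x n - g (y N)" if "N \<le> n" for n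
    using x_step[OF that] y_const[of "n - N"] that by simp
  then have "\<exists>n\<ge>M. x (Suc n) \<le> x n - g (y N)" for M
    by (intro exI[of _ "max N M"]) simp
  then have "\<not> bdd_below (range x)"
    by (rule not_bdd_below_if_frequent_drops[OF decseq_x g_pos[OF y_pos]])
  with bdd_below_x show False by contradiction
qed

lemma ex_x_less:
  assumes "0 < \<epsilon>" shows "\<exists>n. x n < \<epsilon>"
proof (rule ccontr)
  assume "\<not> ?thesis"
  then have "f \<epsilon> \<le> f (x n)" for n by (simp add: not_less monoD[OF mono_f])
  then have "\<exists>n\<ge>N. y (Suc n) \<le> y n - f \<epsilon>" for N
    using frequently_y_step[of N] by force
  then have "\<not> bdd_below (range y)"
    by (rule not_bdd_below_if_frequent_drops[OF decseq_y f_pos[OF assms]])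
  with alternating_descent.bdd_below_x[OF swap] show False by contradiction
qed

lemma ex_x_y_less:
  assumes "0 < \<epsilon>" shows "\<exists>n. x n < \<epsilon> \<and> y n < \<epsilon>"
proof -
  obtain n1 n2 where "x n1 < \<epsilon>" "y n2 < \<epsilon>"
    using ex_x_less alternating_descent.ex_x_less[OF swap] assms by blast
  moreover have "x (max n1 n2) \<le> x n1" "y (max n1 n2) \<le> y n2"
    using decseq_x decseq_y by (simp_all add: decseq_def)
  ultimately have "x (max n1 n2) < \<epsilon> \<and> y (max n1 n2) < \<epsilon>" by linarith
  then show ?thesis by blast
qed

end

lemma continuous_on_interval_sign:
  fixes F :: "real \<Rightarrow> real"
  assumes "continuous_on {a..b} F" "\<forall>s\<in>{a..b}. F s \<noteq> 0"
  shows "(\<forall>s\<in>{a..b}. 0 < F s) \<or> (\<forall>s\<in>{a..b}. F s < 0)"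
proof (rule ccontr)
  assume "\<not> ?thesis"
  then obtain s1 s2 where s: "s1 \<in> {a..b}" "s2 \<in> {a..b}" "F s1 \<le> 0" "0 \<le> F s2"
    by (auto simp: not_less)
  have "connected (F ` {a..b})"
    by (rule connected_continuous_image[OF assms(1) connected_Icc])
  then have "0 \<in> F ` {a..b}"
    by (rule connectedD_interval) (use s in \<open>simp_all only: imageI\<close>)
  then obtain s where "s \<in> {a..b}" "0 = F s" by (rule imageE)
  with assms(2) show False by simp
qed

lemma exists_int_multiple_near:
  fixes t d :: real
  assumes "t \<noteq> 0"
  shows "\<exists>k::int. \<bar>of_int k * t - d\<bar> \<le> \<bar>t\<bar>"
proof -
  define k where "k = \<lfloor>d / t\<rfloor>"
  have "of_int k \<le> d / t" "d / t < of_int k + 1"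
    unfolding k_def by linarith+
  have "\<bar>of_int k * t - d\<bar> = \<bar>of_int k - d / t\<bar> * \<bar>t\<bar>"
    using assms by (simp add: abs_mult [symmetric] algebra_simps)
  also have "\<dots> \<le> 1 * \<bar>t\<bar>"
    using \<open>of_int k \<le> d / t\<close> \<open>d / t < of_int k + 1\<close> by (intro mult_right_mono) auto
  finally show ?thesis by auto
qed

definition reflect :: "real \<times> real \<Rightarrow> real \<times> real" where
  "reflect z = (- fst z, snd z)"

lemma reflect_reflect [simp]: "reflect (reflect z) = z"
  by (simp add: reflect_def)

lemma reflect_conj_id: "reflect \<circ> id \<circ> reflect = id"
  by (simp add: fun_eq_iff)

lemma reflect_conj_comp: "reflect \<circ> (f \<circ> g) \<circ> reflect = (reflect \<circ> f \<circ> reflect) \<circ> (reflect \<circ> g \<circ> reflect)"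
  by (simp add: fun_eq_iff)

locale incr_odd_homeomorphism =
  fixes \<sigma> \<tau> :: "real \<Rightarrow> real"
  assumes homeo: "homeomorphism UNIV UNIV \<sigma> \<tau>"
    and increasing: "strict_mono \<sigma>"
    and odd: "\<sigma> (- x) = - \<sigma> x"
begin

lemma \<tau>_\<sigma> [simp]: "\<tau> (\<sigma> x) = x" and \<sigma>_\<tau> [simp]: "\<sigma> (\<tau> y) = y"
  using homeo by (auto simp: homeomorphism_def)

lemma continuous_\<sigma>: "continuous_on UNIV \<sigma>" and continuous_\<tau>: "continuous_on UNIV \<tau>"
  using homeo by (auto simp: homeomorphism_def)

lemma inv_\<sigma>: "inv \<sigma> = \<tau>"
  by (rule inv_equality) simp_all

lemma \<sigma>_less_iff [simp]: "\<sigma> a < \<sigma> b \<longleftrightarrow> a < b"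
  using increasing by (rule strict_mono_less)

lemma \<sigma>_le_iff [simp]: "\<sigma> a \<le> \<sigma> b \<longleftrightarrow> a \<le> b"
  using increasing by (rule strict_mono_less_eq)

lemma \<tau>_less_iff [simp]: "\<tau> a < \<tau> b \<longleftrightarrow> a < b"
  by (metis \<sigma>_less_iff \<sigma>_\<tau>)

lemma \<tau>_le_iff [simp]: "\<tau> a \<le> \<tau> b \<longleftrightarrow> a \<le> b"
  by (metis \<sigma>_le_iff \<sigma>_\<tau>)

lemma \<sigma>_0 [simp]: "\<sigma> 0 = 0"
  using odd[of 0] by simp

lemma \<tau>_0 [simp]: "\<tau> 0 = 0"
  by (metis \<sigma>_0 \<tau>_\<sigma>)

lemma \<tau>_less_iff_less_\<sigma>: "\<tau> a < b \<longleftrightarrow> a < \<sigma> b"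
  by (metis \<sigma>_less_iff \<sigma>_\<tau>)

lemma \<tau>_odd: "\<tau> (- y) = - \<tau> y"
  by (metis odd \<sigma>_\<tau> \<tau>_\<sigma>)

lemma abs_\<tau>_less_iff: "\<bar>\<tau> b\<bar> < c \<longleftrightarrow> \<bar>b\<bar> < \<sigma> c"
proof -
  have "- \<tau> b < c \<longleftrightarrow> - b < \<sigma> c"
    by (metis \<tau>_odd \<tau>_less_iff_less_\<sigma>)
  then show ?thesis by (simp only: abs_less_iff \<tau>_less_iff_less_\<sigma>)
qed

lemma \<sigma>_pos_iff [simp]: "0 < \<sigma> a \<longleftrightarrow> 0 < a" and \<sigma>_neg_iff [simp]: "\<sigma> a < 0 \<longleftrightarrow> a < 0"
  and \<tau>_pos_iff [simp]: "0 < \<tau> a \<longleftrightarrow> 0 < a" and \<tau>_neg_iff [simp]: "\<tau> a < 0 \<longleftrightarrow> a < 0"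
  by (metis \<sigma>_0 \<tau>_0 \<sigma>_less_iff \<tau>_less_iff)+

lemma h_eq: "h_map \<sigma> = (\<lambda>z. (fst z + \<tau> (snd z), snd z))"
  by (simp add: h_map_def inv_\<sigma> fun_eq_iff split: prod.splits)

lemma v_eq: "v_map \<sigma> = (\<lambda>z. (fst z, \<sigma> (fst z) + snd z))"
  by (simp add: v_map_def fun_eq_iff split: prod.splits)

lemma inv_h_eq: "inv (h_map \<sigma>) = (\<lambda>z. (fst z - \<tau> (snd z), snd z))"
  by (rule inv_equality) (simp_all add: h_eq)

lemma inv_v_eq: "inv (v_map \<sigma>) = (\<lambda>z. (fst z, snd z - \<sigma> (fst z)))"
  by (rule inv_equality) (simp_all add: v_eq)

lemma h_apply: "h_map \<sigma> z = (fst z + \<tau> (snd z), snd z)"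
  and v_apply: "v_map \<sigma> z = (fst z, \<sigma> (fst z) + snd z)"
  and inv_h_apply: "inv (h_map \<sigma>) z = (fst z - \<tau> (snd z), snd z)"
  and inv_v_apply: "inv (v_map \<sigma>) z = (fst z, snd z - \<sigma> (fst z))"
  unfolding inv_h_eq inv_v_eq by (simp_all add: h_eq v_eq)

lemmas generator_apply = h_apply v_apply inv_h_apply inv_v_apply

lemma h_inv_h [simp]: "h_map \<sigma> (inv (h_map \<sigma>) z) = z"
  and v_inv_v [simp]: "v_map \<sigma> (inv (v_map \<sigma>) z) = z"
  and inv_h_h [simp]: "inv (h_map \<sigma>) (h_map \<sigma> z) = z"
  and inv_v_v [simp]: "inv (v_map \<sigma>) (v_map \<sigma> z) = z"
  by (simp_all add: generator_apply)

lemma continuous_generators: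
  "continuous_on UNIV (h_map \<sigma>)" "continuous_on UNIV (v_map \<sigma>)"
  "continuous_on UNIV (inv (h_map \<sigma>))" "continuous_on UNIV (inv (v_map \<sigma>))"
  unfolding inv_h_eq inv_v_eq unfolding h_eq v_eq
  by (intro continuous_intros continuous_on_compose2[OF continuous_\<tau>]
        continuous_on_compose2[OF continuous_\<sigma>]; simp)+

lemma odd_generators:
  "h_map \<sigma> (- w) = - h_map \<sigma> w" "v_map \<sigma> (- w) = - v_map \<sigma> w"
  "inv (h_map \<sigma>) (- w) = - inv (h_map \<sigma>) w" "inv (v_map \<sigma>) (- w) = - inv (v_map \<sigma>) w"
  by (simp_all add: generator_apply odd \<tau>_odd)

lemma funpow_h_apply: "(h_map \<sigma> ^^ n) z = (fst z + real n * \<tau> (snd z), snd z)"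
  by (induction n) (auto simp: h_apply algebra_simps)

lemma funpow_inv_h_apply: "(inv (h_map \<sigma>) ^^ n) z = (fst z - real n * \<tau> (snd z), snd z)"
  by (induction n) (auto simp: inv_h_apply algebra_simps)

lemma funpow_v_apply: "(v_map \<sigma> ^^ n) z = (fst z, snd z + real n * \<sigma> (fst z))"
  by (induction n) (auto simp: v_apply algebra_simps)

lemma Gamma_continuous: "g \<in> Gamma \<sigma> \<Longrightarrow> continuous_on UNIV g"
  by (induction rule: Gamma.induct)
    (auto intro!: continuous_on_compose continuous_on_id
       continuous_on_subset[OF continuous_generators(1)] continuous_on_subset[OF continuous_generators(2)]
       continuous_on_subset[OF continuous_generators(3)] continuous_on_subset[OF continuous_generators(4)]
       simp del: o_apply)

lemma Gamma_odd: "g \<in> Gamma \<sigma> \<Longrightarrow> g (- w) = - g w"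
  by (induction arbitrary: w rule: Gamma.induct) (simp_all add: odd_generators)

lemma Gamma_inverse: "g \<in> Gamma \<sigma> \<Longrightarrow> \<exists>g'\<in>Gamma \<sigma>. \<forall>z. g' (g z) = z"
proof (induction rule: Gamma.induct)
  case Gamma_id
  show ?case by (intro bexI[of _ id] Gamma.Gamma_id) simp
next
  case (Gamma_h g)
  then obtain g' where "g' \<in> Gamma \<sigma>" "\<forall>z. g' (g z) = z" by blast
  then show ?case
    by (intro bexI[of _ "g' \<circ> inv (h_map \<sigma>)"] Gamma_comp generators_in_Gamma) simp_all
next
  case (Gamma_v g)
  then obtain g' where "g' \<in> Gamma \<sigma>" "\<forall>z. g' (g z) = z" by blast
  then show ?case
    by (intro bexI[of _ "g' \<circ> inv (v_map \<sigma>)"] Gamma_comp generators_in_Gamma) simp_all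
next
  case (Gamma_h_inv g)
  then obtain g' where "g' \<in> Gamma \<sigma>" "\<forall>z. g' (g z) = z" by blast
  then show ?case
    by (intro bexI[of _ "g' \<circ> h_map \<sigma>"] Gamma_comp generators_in_Gamma) simp_all
next
  case (Gamma_v_inv g)
  then obtain g' where "g' \<in> Gamma \<sigma>" "\<forall>z. g' (g z) = z" by blast
  then show ?case
    by (intro bexI[of _ "g' \<circ> v_map \<sigma>"] Gamma_comp generators_in_Gamma) simp_all
qed

lemma closure_orbit_Gamma:
  assumes "g \<in> Gamma \<sigma>" "z \<in> closure (orbit \<sigma> p)"
  shows "g z \<in> closure (orbit \<sigma> p)"
proof -
  have "g ` orbit \<sigma> p \<subseteq> closure (orbit \<sigma> p)"
    using orbit_Gamma[OF assms(1)] closure_subset by blast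
  then have "g ` closure (orbit \<sigma> p) \<subseteq> closure (orbit \<sigma> p)"
    using image_closure_subset[OF continuous_on_subset[OF Gamma_continuous[OF assms(1)]]]
    by blast
  with assms(2) show ?thesis by blast
qed

lemma closure_orbit_Gamma_iff:
  assumes "g \<in> Gamma \<sigma>"
  shows "g z \<in> closure (orbit \<sigma> p) \<longleftrightarrow> z \<in> closure (orbit \<sigma> p)"
  using closure_orbit_Gamma[OF assms] Gamma_inverse[OF assms] closure_orbit_Gamma by metis

lemma reflect_conj_generators:
  "reflect \<circ> h_map \<sigma> \<circ> reflect = inv (h_map \<sigma>)" "reflect \<circ> v_map \<sigma> \<circ> reflect = inv (v_map \<sigma>)"
  "reflect \<circ> inv (h_map \<sigma>) \<circ> reflect = h_map \<sigma>" "reflect \<circ> inv (v_map \<sigma>) \<circ> reflect = v_map \<sigma>"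
  by (simp_all add: fun_eq_iff reflect_def generator_apply odd)

lemma Gamma_reflect: "g \<in> Gamma \<sigma> \<Longrightarrow> reflect \<circ> g \<circ> reflect \<in> Gamma \<sigma>"
  by (induction rule: Gamma.induct)
    (simp_all only: reflect_conj_id reflect_conj_comp reflect_conj_generators Gamma.intros)

lemma monoid_gen_reflect:
  "m \<in> monoid_gen (h_map \<sigma>) (v_map \<sigma>) \<Longrightarrow>
    reflect \<circ> m \<circ> reflect \<in> monoid_gen (inv (h_map \<sigma>)) (inv (v_map \<sigma>))"
  by (induction rule: monoid_gen.induct)
    (simp_all only: reflect_conj_id reflect_conj_comp reflect_conj_generators monoid_gen.intros)

definition approaches_origin :: "real \<times> real \<Rightarrow> bool" where
  "approaches_origin p \<longleftrightarrow>
     (\<forall>\<epsilon>>0. \<exists>q\<in>orbit \<sigma> p. fst q \<noteq> 0 \<and> snd q \<noteq> 0 \<and> \<bar>fst q\<bar> < \<epsilon> \<and> \<bar>snd q\<bar> < \<epsilon>)"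

lemma approaches_origin_symmetry:
  assumes conj: "\<And>g. g \<in> Gamma \<sigma> \<Longrightarrow> S \<circ> g \<circ> S \<in> Gamma \<sigma>"
    and involution: "\<And>z. S (S z) = z"
    and abs_fst: "\<And>z. \<bar>fst (S z)\<bar> = \<bar>fst z\<bar>" and abs_snd: "\<And>z. \<bar>snd (S z)\<bar> = \<bar>snd z\<bar>"
    and "approaches_origin (S p)"
  shows "approaches_origin p"
  unfolding approaches_origin_def
proof (intro allI impI)
  fix \<epsilon> :: real assume "0 < \<epsilon>"
  then obtain q where q: "q \<in> orbit \<sigma> (S p)" "fst q \<noteq> 0" "snd q \<noteq> 0" "\<bar>fst q\<bar> < \<epsilon>" "\<bar>snd q\<bar> < \<epsilon>"
    using assms(5) unfolding approaches_origin_def by blast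
  then obtain g where "g \<in> Gamma \<sigma>" "q = g (S p)"
    by (auto simp: orbit_def)
  then have "S q = (S \<circ> g \<circ> S) p" "S \<circ> g \<circ> S \<in> Gamma \<sigma>"
    using involution conj by simp_all
  then have "S q \<in> orbit \<sigma> p"
    unfolding orbit_def by blast
  then show "\<exists>q\<in>orbit \<sigma> p. fst q \<noteq> 0 \<and> snd q \<noteq> 0 \<and> \<bar>fst q\<bar> < \<epsilon> \<and> \<bar>snd q\<bar> < \<epsilon>"
    using q abs_fst[of q] abs_snd[of q] by (intro bexI[of _ "S q"]) auto
qed

lemma approaches_origin_uminus: "approaches_origin (- p) \<Longrightarrow> approaches_origin p"
proof (rule approaches_origin_symmetry)
  show "uminus \<circ> g \<circ> uminus \<in> Gamma \<sigma>" if "g \<in> Gamma \<sigma>" for g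
  proof -
    have "uminus \<circ> g \<circ> uminus = g"
      using Gamma_odd[OF that] by (simp add: fun_eq_iff)
    with that show ?thesis by simp
  qed
qed simp_all

lemma approaches_origin_reflect: "approaches_origin (reflect p) \<Longrightarrow> approaches_origin p"
  by (rule approaches_origin_symmetry[OF Gamma_reflect]) (simp_all add: reflect_def)

lemma horizontal_shift_in_Gamma:
  "\<exists>g\<in>Gamma \<sigma>. \<forall>z. g z = (fst z + of_int k * \<tau> (snd z), snd z)"
proof (cases "0 \<le> k")
  case True
  then show ?thesis
    by (intro bexI[of _ "h_map \<sigma> ^^ nat k"] Gamma_funpow generators_in_Gamma)
      (simp add: funpow_h_apply)
next
  case False
  then show ?thesis
    by (intro bexI[of _ "inv (h_map \<sigma>) ^^ nat (- k)"] Gamma_funpow generators_in_Gamma)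
      (simp add: funpow_inv_h_apply)
qed

lemma Ox_subset_closure_orbit:
  assumes "approaches_origin p"
  shows "Ox \<subseteq> closure (orbit \<sigma> p)"
proof
  fix z assume "z \<in> Ox"
  then obtain S where z: "z = (S, 0)" by (auto simp: Ox_def)
  show "z \<in> closure (orbit \<sigma> p)"
    unfolding closure_approachable
  proof (intro allI impI)
    fix \<epsilon> :: real assume "0 < \<epsilon>"
    then have "0 < min (\<epsilon> / 2) (\<sigma> (\<epsilon> / 2))" by simp
    then obtain q where q: "q \<in> orbit \<sigma> p" "snd q \<noteq> 0"
        "\<bar>fst q\<bar> < min (\<epsilon> / 2) (\<sigma> (\<epsilon> / 2))" "\<bar>snd q\<bar> < min (\<epsilon> / 2) (\<sigma> (\<epsilon> / 2))"
      using assms unfolding approaches_origin_def by blast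
    define t where "t = \<tau> (snd q)"
    have "t \<noteq> 0" using q(2) unfolding t_def by (metis \<sigma>_0 \<sigma>_\<tau>)
    have "\<bar>t\<bar> < \<epsilon> / 2" using q(4) unfolding t_def abs_\<tau>_less_iff by simp
    obtain k :: int where k: "\<bar>of_int k * t - (S - fst q)\<bar> \<le> \<bar>t\<bar>"
      using exists_int_multiple_near[OF \<open>t \<noteq> 0\<close>] by blast
    obtain g where "g \<in> Gamma \<sigma>" and g: "\<And>z. g z = (fst z + of_int k * \<tau> (snd z), snd z)"
      using horizontal_shift_in_Gamma by blast
    then have "g q \<in> orbit \<sigma> p" using orbit_Gamma q(1) by blast
    have "dist (g q) z = norm (fst q + of_int k * t - S, snd q)"
      by (simp add: g z t_def dist_norm)
    also have "\<dots> \<le> \<bar>fst q + of_int k * t - S\<bar> + \<bar>snd q\<bar>"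
      using norm_Pair_le[of "fst q + of_int k * t - S" "snd q"] by (simp only: real_norm_def)
    also have "\<dots> < \<epsilon>"
      using k \<open>\<bar>t\<bar> < \<epsilon> / 2\<close> q(4) by (simp add: diff_diff_eq2 add.commute)
    finally show "\<exists>y\<in>orbit \<sigma> p. dist y z < \<epsilon>"
      using \<open>g q \<in> orbit \<sigma> p\<close> by blast
  qed
qed

definition graph_lines :: "(real \<times> real) set" where
  "graph_lines = (\<Union>M\<in>monoid_gen (h_map \<sigma>) (v_map \<sigma>). M ` v_map \<sigma> ` Ox)"

lemma graph_linesI:
  "M \<in> monoid_gen (h_map \<sigma>) (v_map \<sigma>) \<Longrightarrow> u \<in> Ox \<Longrightarrow> M (v_map \<sigma> u) \<in> graph_lines"
  unfolding graph_lines_def by blast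

lemma graph_linesE:
  assumes "q \<in> graph_lines"
  obtains M u where "M \<in> monoid_gen (h_map \<sigma>) (v_map \<sigma>)" "u \<in> Ox" "q = M (v_map \<sigma> u)"
  using assms unfolding graph_lines_def by blast

lemma graph_lines_graph: "(x, \<sigma> x) \<in> graph_lines"
  using graph_linesI[OF monoid_gen.mon_id, of "(x, 0)"] by (simp add: Ox_def v_apply)

lemma off_graph_if_not_in_graph_lines: "w \<notin> graph_lines \<Longrightarrow> snd w \<noteq> \<sigma> (fst w)"
  using graph_lines_graph[of "fst w"] by (metis prod.collapse)

lemma graph_lines_h: "q \<in> graph_lines \<Longrightarrow> h_map \<sigma> q \<in> graph_lines"
  by (elim graph_linesE) (simp add: graph_linesI[OF monoid_gen.mon_a, unfolded comp_apply])

lemma graph_lines_v: "q \<in> graph_lines \<Longrightarrow> v_map \<sigma> q \<in> graph_lines"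
  by (elim graph_linesE) (simp add: graph_linesI[OF monoid_gen.mon_b, unfolded comp_apply])

lemma graph_lines_uminus: "q \<in> graph_lines \<Longrightarrow> - q \<in> graph_lines"
proof (elim graph_linesE)
  fix M u assume M: "M \<in> monoid_gen (h_map \<sigma>) (v_map \<sigma>)" "u \<in> Ox" "q = M (v_map \<sigma> u)"
  then have "- q = M (v_map \<sigma> (- u))" "- u \<in> Ox"
    using monoid_gen_odd[OF odd_generators(1,2) M(1)] odd_generators(2)
    by (auto simp: Ox_def)
  with M(1) show ?thesis by (simp add: graph_linesI)
qed

lemma graph_lines_subset_rational_lines: "graph_lines \<subseteq> \<Union>(rational_lines \<sigma>)"
proof
  fix q assume "q \<in> graph_lines"
  then obtain M u where M: "M \<in> monoid_gen (h_map \<sigma>) (v_map \<sigma>)" "u \<in> Ox" "q = (M \<circ> v_map \<sigma>) u"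
    by (auto elim: graph_linesE)
  have "M \<circ> v_map \<sigma> \<in> monoid_gen (h_map \<sigma>) (v_map \<sigma>)"
    by (rule monoid_gen_comp[OF M(1) monoid_gen_generators(2)])
  then show "q \<in> \<Union>(rational_lines \<sigma>)"
    by (rule UnionI[OF rational_lines_Ox]) (use M(2,3) in auto)
qed

lemma reflect_graph_lines_subset_rational_lines: "reflect ` graph_lines \<subseteq> \<Union>(rational_lines \<sigma>)"
proof
  fix q assume "q \<in> reflect ` graph_lines"
  then obtain M t where M: "M \<in> monoid_gen (h_map \<sigma>) (v_map \<sigma>)" "q = reflect (M (v_map \<sigma> (t, 0)))"
    by (auto elim!: graph_linesE simp: Ox_def)
  define M' where "M' = (reflect \<circ> M \<circ> reflect) \<circ> inv (h_map \<sigma>)"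
  have "M' \<in> monoid_gen (inv (h_map \<sigma>)) (inv (v_map \<sigma>))"
    unfolding M'_def by (rule monoid_gen_comp[OF monoid_gen_reflect[OF M(1)] monoid_gen_generators(1)])
  moreover have "q = M' (0, \<sigma> t)"
    by (simp add: M(2) M'_def reflect_def generator_apply)
  ultimately show "q \<in> \<Union>(rational_lines \<sigma>)"
    by (intro UnionI[OF rational_lines_Oy]) (auto simp: Oy_def)
qed

lemma graph_lines_subset_closure_orbit:
  assumes "approaches_origin p"
  shows "graph_lines \<subseteq> closure (orbit \<sigma> p)"
proof
  fix q assume "q \<in> graph_lines"
  then obtain M u where M: "M \<in> monoid_gen (h_map \<sigma>) (v_map \<sigma>)" "u \<in> Ox" "q = (M \<circ> v_map \<sigma>) u"
    by (auto elim: graph_linesE)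
  have "M \<circ> v_map \<sigma> \<in> Gamma \<sigma>"
    using M(1) monoid_gen_subset_Gamma by (blast intro: Gamma_comp generators_in_Gamma)
  then show "q \<in> closure (orbit \<sigma> p)"
    using M(2,3) Ox_subset_closure_orbit[OF assms] closure_orbit_Gamma by blast
qed

definition descent :: "real \<times> real \<Rightarrow> real \<times> real" where
  "descent w = (if snd w < \<sigma> (fst w) then inv (h_map \<sigma>) w else inv (v_map \<sigma>) w)"

lemma funpow_descent_in_orbit: "(descent ^^ n) p \<in> orbit \<sigma> p"
proof (induction n)
  case (Suc n)
  then show ?case
    unfolding funpow.simps comp_apply descent_def
    by (simp add: orbit_Gamma generators_in_Gamma)
qed (simp add: in_orbit_self)

lemma graph_lines_if_descent_in: "descent w \<in> graph_lines \<Longrightarrow> w \<in> graph_lines"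
  using graph_lines_h[of "inv (h_map \<sigma>) w"] graph_lines_v[of "inv (v_map \<sigma>) w"]
  by (simp add: descent_def split: if_splits)

lemma funpow_descent_not_in_graph_lines: "z \<notin> graph_lines \<Longrightarrow> (descent ^^ n) z \<notin> graph_lines"
  by (induction n) (auto dest: graph_lines_if_descent_in)

lemma funpow_descent_off_graph:
  "z \<notin> graph_lines \<Longrightarrow> snd ((descent ^^ n) z) \<noteq> \<sigma> (fst ((descent ^^ n) z))"
  by (rule off_graph_if_not_in_graph_lines[OF funpow_descent_not_in_graph_lines])

lemma descent_quadrant:
  assumes "w \<in> {0<..} \<times> {0<..}" "w \<notin> graph_lines"
  shows "descent w \<in> {0<..} \<times> {0<..}"
  using assms off_graph_if_not_in_graph_lines[OF assms(2)]
  by (auto simp: descent_def generator_apply \<tau>_less_iff_less_\<sigma> mem_Times_iff)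

lemma funpow_descent_quadrant:
  assumes "z \<in> {0<..} \<times> {0<..}" "z \<notin> graph_lines"
  shows "(descent ^^ n) z \<in> {0<..} \<times> {0<..}"
  by (induction n) (simp_all add: assms descent_quadrant funpow_descent_not_in_graph_lines)

lemma descent_tends_to_origin:
  assumes "z \<in> {0<..} \<times> {0<..}" "z \<notin> graph_lines" "0 < \<epsilon>"
  shows "\<exists>n. fst ((descent ^^ n) z) < \<epsilon> \<and> snd ((descent ^^ n) z) < \<epsilon>"
proof -
  interpret alternating_descent "\<lambda>n. fst ((descent ^^ n) z)" "\<lambda>n. snd ((descent ^^ n) z)" \<sigma> \<tau>
    using funpow_descent_quadrant[OF assms(1,2)]
    by unfold_locales (auto simp: mem_Times_iff mono_def descent_def generator_apply)
  show ?thesis by (rule ex_x_y_less[OF assms(3)])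
qed

lemma approaches_origin_if_in_quadrant:
  assumes "p \<in> {0<..} \<times> {0<..}" "p \<notin> graph_lines"
  shows "approaches_origin p"
  unfolding approaches_origin_def
proof (intro allI impI)
  fix \<epsilon> :: real assume "0 < \<epsilon>"
  then obtain n where "fst ((descent ^^ n) p) < \<epsilon>" "snd ((descent ^^ n) p) < \<epsilon>"
    using descent_tends_to_origin[OF assms] by blast
  moreover have "(descent ^^ n) p \<in> {0<..} \<times> {0<..}"
    by (rule funpow_descent_quadrant[OF assms])
  ultimately show "\<exists>q\<in>orbit \<sigma> p. fst q \<noteq> 0 \<and> snd q \<noteq> 0 \<and> \<bar>fst q\<bar> < \<epsilon> \<and> \<bar>snd q\<bar> < \<epsilon>"
    using funpow_descent_in_orbit by (intro bexI[of _ "(descent ^^ n) p"]) (auto simp: mem_Times_iff)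
qed

lemma inverse_monoid_spreads:
  assumes "G \<in> monoid_gen (inv (h_map \<sigma>)) (inv (v_map \<sigma>))"
    and "fst w1 \<le> fst w2" "snd w2 \<le> snd w1"
  shows "fst w2 - fst w1 \<le> fst (G w2) - fst (G w1) \<and> snd (G w2) \<le> snd (G w1)"
  using assms(1)
proof induction
  case (mon_a m)
  then have "\<tau> (snd (m w2)) \<le> \<tau> (snd (m w1))" by simp
  then show ?case
    using mon_a.IH unfolding comp_apply inv_h_apply fst_conv snd_conv by linarith
next
  case (mon_b m)
  then have "\<sigma> (fst (m w1)) \<le> \<sigma> (fst (m w2))" using assms(2) by simp
  then show ?case
    using mon_b.IH unfolding comp_apply inv_v_apply fst_conv snd_conv by linarith
qed (simp add: assms(3))

lemma descent_word_on_segment: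
  assumes off: "\<forall>s\<in>{-r..r}. (X + s, Y) \<notin> graph_lines"
  shows "\<exists>G\<in>monoid_gen (inv (h_map \<sigma>)) (inv (v_map \<sigma>)).
           \<forall>s\<in>{-r..r}. (descent ^^ n) (X + s, Y) = G (X + s, Y)"
proof (induction n)
  case 0
  show ?case by (intro bexI[of _ id] monoid_gen.mon_id) simp
next
  case (Suc n)
  then obtain G where G: "G \<in> monoid_gen (inv (h_map \<sigma>)) (inv (v_map \<sigma>))"
    and descent_G: "\<forall>s\<in>{-r..r}. (descent ^^ n) (X + s, Y) = G (X + s, Y)"
    by blast
  define F where "F s = \<sigma> (fst (G (X + s, Y))) - snd (G (X + s, Y))" for s
  have "continuous_on UNIV (\<lambda>s. G (X + s, Y))"
    by (rule continuous_on_compose2[OF monoid_gen_continuous[OF continuous_generators(3,4) G]])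
      (auto intro!: continuous_intros)
  then have "continuous_on UNIV F"
    unfolding F_def by (intro continuous_intros continuous_on_compose2[OF continuous_\<sigma>]) auto
  then have "continuous_on {-r..r} F"
    by (rule continuous_on_subset) simp
  moreover have "\<forall>s\<in>{-r..r}. F s \<noteq> 0"
  proof
    fix s assume "s \<in> {-r..r}"
    with off descent_G funpow_descent_off_graph[of "(X + s, Y)" n] show "F s \<noteq> 0"
      by (simp add: F_def)
  qed
  ultimately consider "\<forall>s\<in>{-r..r}. 0 < F s" | "\<forall>s\<in>{-r..r}. F s < 0"
    using continuous_on_interval_sign by blast
  then show ?case
  proof cases
    case 1
    then have "\<forall>s\<in>{-r..r}. (descent ^^ Suc n) (X + s, Y) = (inv (h_map \<sigma>) \<circ> G) (X + s, Y)"
      using descent_G by (simp add: descent_def F_def)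
    then show ?thesis using monoid_gen.mon_a[OF G] by blast
  next
    case 2
    then have "\<forall>s\<in>{-r..r}. (descent ^^ Suc n) (X + s, Y) = (inv (v_map \<sigma>) \<circ> G) (X + s, Y)"
      using descent_G by (auto simp: descent_def F_def)
    then show ?thesis using monoid_gen.mon_b[OF G] by blast
  qed
qed

lemma segment_meets_graph_lines:
  assumes "0 < r" "r < X" "0 < Y"
  shows "\<exists>s\<in>{-r..r}. (X + s, Y) \<in> graph_lines"
proof (rule ccontr)
  assume "\<not> ?thesis"
  then have off: "\<forall>s\<in>{-r..r}. (X + s, Y) \<notin> graph_lines" by blast
  have quadrant: "(X + s, Y) \<in> {0<..} \<times> {0<..}" if "s \<in> {-r..r}" for s
    using that assms by auto
  have ends: "- r \<in> {-r..r}" "r \<in> {-r..r}"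
    using assms(1) by simp_all
  obtain n where small: "fst ((descent ^^ n) (X + r, Y)) < 2 * r"
    using descent_tends_to_origin[OF quadrant[OF ends(2)] off[rule_format, OF ends(2)], of "2 * r"]
      assms(1) by auto
  obtain G where G: "G \<in> monoid_gen (inv (h_map \<sigma>)) (inv (v_map \<sigma>))"
    and descent_G: "\<forall>s\<in>{-r..r}. (descent ^^ n) (X + s, Y) = G (X + s, Y)"
    using descent_word_on_segment[OF off] by blast
  have left: "(descent ^^ n) (X - r, Y) = G (X - r, Y)"
    using bspec[OF descent_G ends(1)] by simp
  have right: "(descent ^^ n) (X + r, Y) = G (X + r, Y)"
    using bspec[OF descent_G ends(2)] .
  have "(X + r) - (X - r) \<le> fst (G (X + r, Y)) - fst (G (X - r, Y))"
    using inverse_monoid_spreads[OF G, of "(X - r, Y)" "(X + r, Y)"] assms(1) by simp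
  moreover have "0 < fst (G (X - r, Y))"
    using funpow_descent_quadrant[OF quadrant[OF ends(1)] off[rule_format, OF ends(1)], of n]
    by (simp add: left mem_Times_iff)
  ultimately show False
    using small unfolding right by linarith
qed

lemma quadrant_subset_closure_graph_lines: "{0<..} \<times> {0<..} \<subseteq> closure graph_lines"
proof
  fix z :: "real \<times> real" assume "z \<in> {0<..} \<times> {0<..}"
  then obtain X Y where z: "z = (X, Y)" "0 < X" "0 < Y" by auto
  show "z \<in> closure graph_lines"
    unfolding closure_approachable
  proof (intro allI impI)
    fix \<epsilon> :: real assume "0 < \<epsilon>"
    define r where "r = min (\<epsilon> / 2) (X / 2)"
    have "0 < r" "r < X" "r < \<epsilon>"
      using \<open>0 < \<epsilon>\<close> z(2) by (simp_all add: r_def)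
    then obtain s where "s \<in> {-r..r}" "(X + s, Y) \<in> graph_lines"
      using segment_meets_graph_lines z(3) by blast
    then have "\<bar>s\<bar> < \<epsilon>" "(X + s, Y) \<in> graph_lines"
      using \<open>r < \<epsilon>\<close> by auto
    then show "\<exists>y\<in>graph_lines. dist y z < \<epsilon>"
      by (intro bexI[of _ "(X + s, Y)"]) (simp_all add: z dist_Pair_Pair dist_real_def)
  qed
qed

lemma Gamma_moves_into_quadrant:
  assumes "snd z \<noteq> 0"
  shows "\<exists>g\<in>Gamma \<sigma>. g z \<in> {0<..} \<times> {0<..}"
proof -
  define t where "t = \<tau> (snd z)"
  have "t \<noteq> 0" using assms unfolding t_def by (metis \<sigma>_0 \<sigma>_\<tau>)
  then obtain n where n: "- fst z < real n * \<bar>t\<bar>"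
    using reals_Archimedean3[of "\<bar>t\<bar>"] by auto
  define g1 where "g1 = (if 0 < t then h_map \<sigma> ^^ n else inv (h_map \<sigma>) ^^ n)"
  have "g1 \<in> Gamma \<sigma>"
    unfolding g1_def by (simp add: Gamma_funpow generators_in_Gamma)
  have g1: "g1 z = (fst z + real n * \<bar>t\<bar>, snd z)"
    using assms unfolding g1_def t_def by (auto simp: funpow_h_apply funpow_inv_h_apply abs_if)
  show ?thesis
  proof (cases "0 < snd z")
    case True
    then show ?thesis using \<open>g1 \<in> Gamma \<sigma>\<close> g1 n by (intro bexI[of _ g1]) auto
  next
    case False
    have "0 < \<sigma> (fst (g1 z))" using g1 n by simp
    then obtain m where m: "- snd z < real m * \<sigma> (fst (g1 z))"
      using reals_Archimedean3 by blast
    have "v_map \<sigma> ^^ m \<circ> g1 \<in> Gamma \<sigma>"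
      by (intro Gamma_comp Gamma_funpow generators_in_Gamma \<open>g1 \<in> Gamma \<sigma>\<close>)
    then show ?thesis
      using g1 n m by (intro bexI[of _ "v_map \<sigma> ^^ m \<circ> g1"]) (auto simp: funpow_v_apply)
  qed
qed

lemma closure_orbit_eq_UNIV:
  assumes "approaches_origin p"
  shows "closure (orbit \<sigma> p) = UNIV"
proof -
  have quadrant: "{0<..} \<times> {0<..} \<subseteq> closure (orbit \<sigma> p)"
    by (rule order.trans[OF quadrant_subset_closure_graph_lines
          closure_minimal[OF graph_lines_subset_closure_orbit[OF assms] closed_closure]])
  have "z \<in> closure (orbit \<sigma> p)" for z
  proof (cases "snd z = 0")
    case True
    then have "z \<in> Ox" by (auto simp: Ox_def mem_Times_iff)
    then show ?thesis by (rule subsetD[OF Ox_subset_closure_orbit[OF assms]])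
  next
    case False
    from Gamma_moves_into_quadrant[OF False]
    obtain g where g: "g \<in> Gamma \<sigma>" "g z \<in> {0<..} \<times> {0<..}" ..
    show ?thesis
      using subsetD[OF quadrant g(2)] unfolding closure_orbit_Gamma_iff[OF g(1)] .
  qed
  then show ?thesis by auto
qed

lemma not_in_graph_lines_if_not_in_rational_lines:
  assumes "p \<notin> \<Union>(rational_lines \<sigma>)"
  shows "p \<notin> graph_lines" "reflect p \<notin> graph_lines"
proof -
  show "p \<notin> graph_lines"
    using graph_lines_subset_rational_lines assms by (rule contra_subsetD)
  show "reflect p \<notin> graph_lines"
  proof
    assume "reflect p \<in> graph_lines"
    then have "reflect (reflect p) \<in> reflect ` graph_lines" by (rule imageI)
    with reflect_graph_lines_subset_rational_lines assms show False by auto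
  qed
qed

lemma approaches_origin_if_avoids_rational_lines:
  assumes "\<forall>L\<in>rational_lines \<sigma>. p \<notin> L"
  shows "approaches_origin p"
proof -
  have "Ox \<in> rational_lines \<sigma>" "Oy \<in> rational_lines \<sigma>"
    by (simp_all add: rational_lines_def)
  then have "fst p \<noteq> 0" "snd p \<noteq> 0"
    using assms by (auto simp: Ox_def Oy_def mem_Times_iff)
  have "p \<notin> \<Union>(rational_lines \<sigma>)"
    using assms by auto
  then have "p \<notin> graph_lines" "reflect p \<notin> graph_lines"
    by (rule not_in_graph_lines_if_not_in_rational_lines)+
  then have "- p \<notin> graph_lines" "- reflect p \<notin> graph_lines"
    using graph_lines_uminus[of "- p"] graph_lines_uminus[of "- reflect p"] by auto
  consider "p \<in> {0<..} \<times> {0<..}" | "- p \<in> {0<..} \<times> {0<..}"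
    | "reflect p \<in> {0<..} \<times> {0<..}" | "- reflect p \<in> {0<..} \<times> {0<..}"
    using \<open>fst p \<noteq> 0\<close> \<open>snd p \<noteq> 0\<close> unfolding reflect_def mem_Times_iff by fastforce
  then show ?thesis
  proof cases
    case 1
    then show ?thesis
      using \<open>p \<notin> graph_lines\<close> by (rule approaches_origin_if_in_quadrant)
  next
    case 2
    then show ?thesis
      using \<open>- p \<notin> graph_lines\<close>
      by (rule approaches_origin_uminus[OF approaches_origin_if_in_quadrant])
  next
    case 3
    then show ?thesis
      using \<open>reflect p \<notin> graph_lines\<close>
      by (rule approaches_origin_reflect[OF approaches_origin_if_in_quadrant])
  next
    case 4
    then show ?thesis
      using \<open>- reflect p \<notin> graph_lines\<close>
      by (rule approaches_origin_reflect[OF approaches_origin_uminus[OF approaches_origin_if_in_quadrant]])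
  qed
qed

end

theorem theorem1:
  fixes \<sigma> :: "real \<Rightarrow> real" and p :: "real \<times> real"
  assumes "incr_odd_homeo \<sigma>"
    and "\<forall>L \<in> rational_lines \<sigma>. p \<notin> L"
  shows "closure (orbit \<sigma> p) = UNIV"
proof -
  obtain \<tau> where "homeomorphism UNIV UNIV \<sigma> \<tau>" "strict_mono \<sigma>" "\<And>x. \<sigma> (- x) = - \<sigma> x"
    using assms(1) unfolding incr_odd_homeo_def by blast
  then interpret incr_odd_homeomorphism \<sigma> \<tau>
    by unfold_locales
  show ?thesis
    using assms(2) by (intro closure_orbit_eq_UNIV approaches_origin_if_avoids_rational_lines)
qed

end
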